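(* Consider the problem and algorithm AC2CD described in the context. At every inner iteration $(k,i)$, with $p=p^k_i$ and $j=j(k)$: (a) if $\Delta^{k,i} \le \frac{2(1-\gamma)}{L_{p,j}}$, then $\alpha^{k,i} = \Delta^{k,i}$; (b) if $\Delta^{k,i} > \frac{2(1-\gamma)}{L_{p,j}}$, then $\alpha^{k,i} \in \bigl(\frac{2\delta(1-\gamma)}{L_{p,j}}, \Delta^{k,i}\bigr]$. Consequently $\alpha^{k,i} \ge \min\bigl\{\Delta^{k,i}, \frac{2\delta(1-\gamma)}{L_{p,j}}\bigr\}$.
   Context: Problem: minimize $f(x)$ subject to $e^T x = b$ and $l_i \le x_i \le u_i$ ($i=1,\dots,n$), where $n\ge 2$, $e\in\mathbb{R}^n$ is the all-ones vector, $b\in\mathbb{R}$, $l_i\in\mathbb{R}\cup\{-\infty\}$, $u_i\in\mathbb{R}\cup\{+\infty\}$, $l_i<u_i$, and $f:\mathbb{R}^n\to\mathbb{R}$ is continuously differentiable with $\nabla f$ Lipschitz continuous on $\mathbb{R}^n$ with constant $L$. $\mathcal F$ is the feasible set and $e_i$ the $i$th unit vector. For $i\ne j$, $L_{i,j}>0$ are fixed constants such that for every $x\in\mathbb{R}^n$ and $s,t\in\mathbb{R}$, $|\nabla f(x+s(e_i-e_j))^T(e_i-e_j)-\nabla f(x+t(e_i-e_j))^T(e_i-e_j)|\le L_{i,j}|s-t|$; $L_{i,i}=0$ (and $c/0$ is read as $+\infty$ for $c>0$). For $x\in\mathcal F$, $D_h(x)=\min\{x_h-l_h,u_h-x_h\}$.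 Algorithm AC2CD with parameters $\tau\in(0,1]$, $\gamma,\delta\in(0,1)$, $0<A_l\le A_u<\infty$ and starting point $x^0\in\mathcal F$: for $k=0,1,2,\dots$ (outer iterations): let $D^k=\max_h D_h(x^k)$; choose an index $j(k)$ with $D_{j(k)}(x^k)\ge\tau D^k$; choose a permutation $(p^k_1,\dots,p^k_n)$ of $\{1,\dots,n\}$; set $z^{k,1}=x^k$; for $i=1,\dots,n$ (inner iteration $(k,i)$): set $g^{k,i}=\nabla_{j(k)}f(z^{k,i})-\nabla_{p^k_i}f(z^{k,i})$ and $d^{k,i}=g^{k,i}(e_{p^k_i}-e_{j(k)})$; let $\bar\alpha^{k,i}=\min\{u_{p^k_i}-z^{k,i}_{p^k_i},\,z^{k,i}_{j(k)}-l_{j(k)}\}/g^{k,i}$ if $g^{k,i}>0$, $\bar\alpha^{k,i}=\min\{z^{k,i}_{p^k_i}-l_{p^k_i},\,u_{j(k)}-z^{k,i}_{j(k)}\}/|g^{k,i}|$ if $g^{k,i}<0$, and $\bar\alpha^{k,i}=0$ if $g^{k,i}=0$; choose $A^{k,i}\in[A_l,A_u]$ and set $\Delta^{k,i}=\min\{\bar\alpha^{k,i},A^{k,i}\}$; Armijo line search: start with $\alpha=\Delta^{k,i}$ and, while $f(z^{k,i}+\alpha d^{k,i})>f(z^{k,i})+\gamma\alpha\nabla f(z^{k,i})^Td^{k,i}$, replace $\alpha$ by $\delta\alpha$; let $\alpha^{k,i}$ be the final $\alpha$ and $z^{k,i+1}=z^{k,i}+\alpha^{k,i}d^{k,i}$.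 Finally $x^{k+1}=z^{k,n+1}$. Standing assumptions: the level set $\mathcal L_0=\{x\in\mathcal F: f(x)\le f(x^0)\}$ is nonempty and compact, and every $x\in\mathcal L_0$ has at least one index $i$ with $l_i<x_i<u_i$. *)

theory Defs
  imports "HOL-Analysis.Analysis" "HOL-Library.Extended_Real"
begin

definition feasible :: "ereal ^ 'n \<Rightarrow> ereal ^ 'n \<Rightarrow> real \<Rightarrow> (real ^ 'n::finite) set" where
  "feasible l u b = {x. (\<Sum>i\<in>UNIV. x $ i) = b \<and> (\<forall>i. l $ i \<le> ereal (x $ i) \<and> ereal (x $ i) \<le> u $ i)}"

definition Dist :: "ereal ^ 'n \<Rightarrow> ereal ^ 'n \<Rightarrow> real ^ 'n \<Rightarrow> 'n \<Rightarrow> ereal" where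
  "Dist l u x h = min (ereal (x $ h) - l $ h) (u $ h - ereal (x $ h))"

definition gval :: "(real ^ 'n \<Rightarrow> real ^ 'n) \<Rightarrow> real ^ 'n \<Rightarrow> 'n \<Rightarrow> 'n \<Rightarrow> real" where
  "gval grad z p j = grad z $ j - grad z $ p"

text \<open>Maximal feasible step alpha-bar (possibly +infinity when bounds are infinite).\<close>
definition alpha_bar :: "ereal ^ 'n \<Rightarrow> ereal ^ 'n \<Rightarrow> real ^ 'n \<Rightarrow> 'n \<Rightarrow> 'n \<Rightarrow> real \<Rightarrow> ereal" where
  "alpha_bar l u z p j g =
     (if g > 0 then min (u $ p - ereal (z $ p)) (ereal (z $ j) - l $ j) / ereal g
      else if g < 0 then min (ereal (z $ p) - l $ p) (u $ j - ereal (z $ j)) / ereal \<bar>g\<bar>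
      else 0)"

definition armijo :: "(real ^ 'n \<Rightarrow> real) \<Rightarrow> (real ^ 'n \<Rightarrow> real ^ 'n) \<Rightarrow> real ^ 'n \<Rightarrow> real ^ 'n
                      \<Rightarrow> real \<Rightarrow> real \<Rightarrow> real \<Rightarrow> real" where
  "armijo f grad z d Delta \<gamma> \<delta> =
     Delta * \<delta> ^ (LEAST m. f (z + (Delta * \<delta> ^ m) *\<^sub>R d) \<le> f z + \<gamma> * (Delta * \<delta> ^ m) * (grad z \<bullet> d))"

end

theory Submission
  imports Defs
begin

text \<open>Along the coordinate direction d = g (e_p - e_j) the slope of f is -g^2 and the directional
  derivative grows at rate at most L_pj g^2, so by the one-dimensional descent lemma every step
  t >= 0 with L_pj t <= 2(1 - \<gamma>) passes the Armijo test. Backtracking from \<Delta> therefore accepts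
  \<Delta> itself when it is that short; otherwise the accepted step is \<delta> times a rejected one, and
  rejected steps exceed 2(1 - \<gamma>)/L_pj. The iteration matters only through the invariant that
  the iterates stay in the box, which makes \<Delta> nonnegative.\<close>

lemma one_sided_descent_lemma:
  fixes h h' :: "real \<Rightarrow> real"
  assumes der: "\<And>s. (h has_real_derivative h' s) (at s)"
    and growth: "\<And>s. 0 \<le> s \<Longrightarrow> h' s - h' 0 \<le> M * s"
    and "0 \<le> t"
  shows "h t \<le> h 0 + t * h' 0 + M * t\<^sup>2 / 2"
proof (cases "t = 0")
  case False
  with \<open>0 \<le> t\<close> have "0 < t" by simp
  define \<psi> where "\<psi> s = h s - s * h' 0 - M * s\<^sup>2 / 2" for s
  have "DERIV \<psi> s :> h' s - h' 0 - M * s" for s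
    unfolding \<psi>_def by (auto intro!: derivative_eq_intros der)
  then obtain \<xi> where "0 < \<xi>" "\<psi> t - \<psi> 0 = t * (h' \<xi> - h' 0 - M * \<xi>)"
    using MVT2[OF \<open>0 < t\<close>, of \<psi> "\<lambda>s. h' s - h' 0 - M * s"] by auto
  moreover have "h' \<xi> - h' 0 - M * \<xi> \<le> 0"
    using growth[of \<xi>] \<open>0 < \<xi>\<close> by simp
  ultimately have "\<psi> t \<le> \<psi> 0"
    using \<open>0 < t\<close> by (metis diff_le_0_iff_le less_imp_le mult_nonneg_nonpos)
  then show ?thesis unfolding \<psi>_def by simp
qed simp

lemma has_real_derivative_along_line:
  fixes f :: "'a::real_inner \<Rightarrow> real"
  assumes "\<And>y. (f has_derivative (\<lambda>h. grad y \<bullet> h)) (at y)"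
  shows "((\<lambda>s. f (z + s *\<^sub>R d)) has_real_derivative grad (z + s *\<^sub>R d) \<bullet> d) (at s)"
proof -
  have "((\<lambda>s. z + s *\<^sub>R d) has_derivative (\<lambda>s. s *\<^sub>R d)) (at s)"
    by (auto intro!: derivative_eq_intros)
  from has_derivative_compose[OF this assms]
  have "((\<lambda>s. f (z + s *\<^sub>R d)) has_derivative (\<lambda>r. r * (grad (z + s *\<^sub>R d) \<bullet> d))) (at s)"
    by (simp add: o_def)
  then show ?thesis
    by (rule has_derivative_imp_has_field_derivative) simp
qed

lemma descent_lemma_along_line:
  fixes f :: "'a::real_inner \<Rightarrow> real"
  assumes "\<And>y. (f has_derivative (\<lambda>h. grad y \<bullet> h)) (at y)"
    and "\<And>s. 0 \<le> s \<Longrightarrow> grad (z + s *\<^sub>R d) \<bullet> d - grad z \<bullet> d \<le> M * s"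
    and "0 \<le> t"
  shows "f (z + t *\<^sub>R d) \<le> f z + t * (grad z \<bullet> d) + M * t\<^sup>2 / 2"
  using one_sided_descent_lemma[where h = "\<lambda>s. f (z + s *\<^sub>R d)" and h' = "\<lambda>s. grad (z + s *\<^sub>R d) \<bullet> d"]
    has_real_derivative_along_line[OF assms(1)] assms(2,3) by simp

lemma armijo_condition_if_short_step:
  fixes f :: "'a::real_inner \<Rightarrow> real"
  assumes "\<And>y. (f has_derivative (\<lambda>h. grad y \<bullet> h)) (at y)"
    and "\<And>s. 0 \<le> s \<Longrightarrow> grad (z + s *\<^sub>R d) \<bullet> d - grad z \<bullet> d \<le> M * s"
    and "0 \<le> t" and short: "M * t \<le> 2 * (1 - \<gamma>) * - (grad z \<bullet> d)"
  shows "f (z + t *\<^sub>R d) \<le> f z + \<gamma> * t * (grad z \<bullet> d)"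
proof -
  have "t * ((1 - \<gamma>) * (grad z \<bullet> d) + M * t / 2) \<le> 0"
    using \<open>0 \<le> t\<close> short by (intro mult_nonneg_nonpos) (auto simp: field_simps)
  then have "t * (grad z \<bullet> d) + M * t\<^sup>2 / 2 \<le> \<gamma> * t * (grad z \<bullet> d)"
    by (simp add: algebra_simps power2_eq_square)
  with descent_lemma_along_line[OF assms(1-3)] show ?thesis by simp
qed

lemma backtracking_step_bounds:
  fixes P :: "real \<Rightarrow> bool"
  assumes "0 \<le> Delta" "0 < \<delta>" "\<delta> < 1" "0 \<le> K" "0 < c"
    and accept: "\<And>t. 0 \<le> t \<Longrightarrow> K * t \<le> c \<Longrightarrow> P t"
  defines "\<alpha> \<equiv> Delta * \<delta> ^ (LEAST m. P (Delta * \<delta> ^ m))"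
  shows "0 \<le> \<alpha>" and "\<alpha> \<le> Delta"
    and "K * Delta \<le> c \<Longrightarrow> \<alpha> = Delta"
    and "c < K * Delta \<Longrightarrow> \<delta> * c < K * \<alpha>"
proof -
  have "\<exists>m. K * (Delta * \<delta> ^ m) \<le> c"
  proof (cases "K * Delta = 0")
    case False
    then have "0 < K * Delta" using assms(1,4) by simp
    then obtain m where "\<delta> ^ m < c / (K * Delta)"
      using real_arch_pow_inv[of "c / (K * Delta)" \<delta>] assms(2,3,5) by auto
    then have "K * (Delta * \<delta> ^ m) < c" using \<open>0 < K * Delta\<close> by (simp add: field_simps)
    then show ?thesis by (blast intro: less_imp_le)
  qed (use assms(5) in auto)
  then have "\<exists>m. P (Delta * \<delta> ^ m)"
    using accept assms(1,2) by (meson zero_le_mult_iff zero_le_power less_imp_le)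
  then obtain m0 where m0: "(LEAST m. P (Delta * \<delta> ^ m)) = m0" "P (Delta * \<delta> ^ m0)"
    and rejected: "\<And>m. m < m0 \<Longrightarrow> \<not> P (Delta * \<delta> ^ m)"
    by (metis LeastI not_less_Least)
  have \<alpha>: "\<alpha> = Delta * \<delta> ^ m0" unfolding \<alpha>_def m0(1) ..
  have "0 \<le> \<delta> ^ m0" "\<delta> ^ m0 \<le> 1" using assms(2,3) by (auto simp: power_le_one)
  with \<alpha> assms(1) show "0 \<le> \<alpha>" "\<alpha> \<le> Delta" by (auto simp: mult_left_le)
  show "\<alpha> = Delta" if "K * Delta \<le> c"
  proof -
    have "m0 = 0" using rejected[of 0] accept[OF assms(1) that] by (cases m0) auto
    then show ?thesis using \<alpha> by simp
  qed
  show "\<delta> * c < K * \<alpha>" if "c < K * Delta"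
  proof (cases m0)
    case 0
    then have "\<delta> * c < c" using assms(3,5) by simp
    with that show ?thesis using \<alpha> 0 by simp
  next
    case (Suc m)
    then have "c < K * (Delta * \<delta> ^ m)"
      using rejected[of m] accept[of "Delta * \<delta> ^ m"] assms(1,2) by force
    then show ?thesis using \<alpha> Suc assms(2) by (simp add: mult_ac)
  qed
qed

lemma coordinate_armijo_step_bounds:
  fixes f :: "real ^ 'n::finite \<Rightarrow> real"
  assumes deriv: "\<And>y. (f has_derivative (\<lambda>h. grad y \<bullet> h)) (at y)"
    and lip: "\<And>s t. \<bar>grad (z + s *\<^sub>R (axis p 1 - axis j 1)) \<bullet> (axis p 1 - axis j 1)
                     - grad (z + t *\<^sub>R (axis p 1 - axis j 1)) \<bullet> (axis p 1 - axis j 1)\<bar> \<le> K * \<bar>s - t\<bar>"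
    and \<gamma>: "0 < \<gamma>" "\<gamma> < 1" and \<delta>: "0 < \<delta>" "\<delta> < 1" and "0 \<le> Delta"
    and \<alpha>: "\<alpha> = armijo f grad z (gval grad z p j *\<^sub>R (axis p 1 - axis j 1)) Delta \<gamma> \<delta>"
  shows "0 \<le> \<alpha>" and "\<alpha> \<le> Delta"
    and "((K = 0 \<or> Delta \<le> 2 * (1 - \<gamma>) / K) \<longrightarrow> \<alpha> = Delta)
       \<and> ((K \<noteq> 0 \<and> Delta > 2 * (1 - \<gamma>) / K) \<longrightarrow> 2 * \<delta> * (1 - \<gamma>) / K < \<alpha> \<and> \<alpha> \<le> Delta)
       \<and> \<alpha> \<ge> (if K = 0 then Delta else min Delta (2 * \<delta> * (1 - \<gamma>) / K))"
proof -
  define v :: "real ^ 'n" where "v = axis p 1 - axis j 1"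
  define g where "g = gval grad z p j"
  define d where "d = g *\<^sub>R v"
  have "grad z \<bullet> v = - g"
    unfolding v_def g_def gval_def by (simp add: inner_diff_right inner_axis)
  then have slope: "grad z \<bullet> d = - g\<^sup>2"
    unfolding d_def by (simp add: power2_eq_square)
  have "K \<ge> 0"
    using lip[of 1 0] abs_ge_zero order_trans by fastforce
  have growth: "grad (z + s *\<^sub>R d) \<bullet> d - grad z \<bullet> d \<le> (K * g\<^sup>2) * s" if "0 \<le> s" for s
  proof -
    have "\<bar>grad (z + (s * g) *\<^sub>R v) \<bullet> v - grad z \<bullet> v\<bar> \<le> K * \<bar>s * g\<bar>"
      using lip[of "s * g" 0] unfolding v_def by simp
    then have "\<bar>g\<bar> * \<bar>grad (z + (s * g) *\<^sub>R v) \<bullet> v - grad z \<bullet> v\<bar> \<le> \<bar>g\<bar> * (K * \<bar>s * g\<bar>)"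
      by (simp add: mult_left_mono)
    also have "\<dots> = K * g\<^sup>2 * s" using that by (simp add: abs_mult power2_eq_square)
    finally have "g * (grad (z + (s * g) *\<^sub>R v) \<bullet> v - grad z \<bullet> v) \<le> K * g\<^sup>2 * s"
      by (metis abs_ge_self abs_mult order_trans)
    then show ?thesis
      unfolding d_def by (simp add: right_diff_distrib)
  qed
  have accept: "f (z + t *\<^sub>R d) \<le> f z + \<gamma> * t * (grad z \<bullet> d)"
    if "0 \<le> t" "K * t \<le> 2 * (1 - \<gamma>)" for t
  proof (rule armijo_condition_if_short_step[OF deriv growth \<open>0 \<le> t\<close>])
    have "K * t * g\<^sup>2 \<le> 2 * (1 - \<gamma>) * g\<^sup>2" using that(2) by (simp add: mult_right_mono)
    then show "K * g\<^sup>2 * t \<le> 2 * (1 - \<gamma>) * - (grad z \<bullet> d)" by (simp add: slope mult_ac)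
  qed
  have \<alpha>': "\<alpha> = Delta * \<delta> ^ (LEAST m. f (z + (Delta * \<delta> ^ m) *\<^sub>R d) \<le> f z + \<gamma> * (Delta * \<delta> ^ m) * (grad z \<bullet> d))"
    unfolding \<alpha> armijo_def d_def g_def v_def ..
  have "0 < 2 * (1 - \<gamma>)" using \<gamma> by simp
  note bounds = backtracking_step_bounds[where P = "\<lambda>t. f (z + t *\<^sub>R d) \<le> f z + \<gamma> * t * (grad z \<bullet> d)",
      OF \<open>0 \<le> Delta\<close> \<delta> \<open>K \<ge> 0\<close> this accept, folded \<alpha>']
  show "0 \<le> \<alpha>" "\<alpha> \<le> Delta" using bounds \<gamma> by auto
  show "((K = 0 \<or> Delta \<le> 2 * (1 - \<gamma>) / K) \<longrightarrow> \<alpha> = Delta)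
       \<and> ((K \<noteq> 0 \<and> Delta > 2 * (1 - \<gamma>) / K) \<longrightarrow> 2 * \<delta> * (1 - \<gamma>) / K < \<alpha> \<and> \<alpha> \<le> Delta)
       \<and> \<alpha> \<ge> (if K = 0 then Delta else min Delta (2 * \<delta> * (1 - \<gamma>) / K))"
  proof (cases "K = 0")
    case False
    then have "0 < K" using \<open>K \<ge> 0\<close> by simp
    then have "Delta \<le> 2 * (1 - \<gamma>) / K \<Longrightarrow> \<alpha> = Delta"
      and "2 * (1 - \<gamma>) / K < Delta \<Longrightarrow> 2 * \<delta> * (1 - \<gamma>) / K < \<alpha>"
      using bounds(3,4) by (auto simp: field_simps)
    with False bounds(2) show ?thesis by (cases "Delta \<le> 2 * (1 - \<gamma>) / K") auto
  qed (use bounds \<gamma> in auto)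
qed

definition in_box :: "ereal ^ 'n \<Rightarrow> ereal ^ 'n \<Rightarrow> real ^ 'n \<Rightarrow> bool" where
  "in_box l u y \<longleftrightarrow> (\<forall>h. l $ h \<le> ereal (y $ h) \<and> ereal (y $ h) \<le> u $ h)"

lemma alpha_bar_nonneg:
  assumes "in_box l u y"
  shows "0 \<le> alpha_bar l u y p j g"
proof -
  have "0 \<le> u $ h - ereal (y $ h)" "0 \<le> ereal (y $ h) - l $ h" for h
    using assms unfolding in_box_def by (simp_all add: ereal_diff_positive)
  then show ?thesis
    unfolding alpha_bar_def by simp
qed

lemma truncated_step_bounds:
  assumes "in_box l u y" "0 < A"
    and Delta: "Delta = real_of_ereal (min (alpha_bar l u y p j g) (ereal A))"
  shows "0 \<le> Delta" and "ereal Delta \<le> alpha_bar l u y p j g"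
proof -
  have nonneg: "0 \<le> min (alpha_bar l u y p j g) (ereal A)"
    using alpha_bar_nonneg[OF assms(1)] assms(2) by auto
  moreover have "min (alpha_bar l u y p j g) (ereal A) \<le> ereal A" by simp
  ultimately have "ereal Delta = min (alpha_bar l u y p j g) (ereal A)"
    unfolding Delta by (cases "min (alpha_bar l u y p j g) (ereal A)") auto
  with nonneg show "0 \<le> Delta" "ereal Delta \<le> alpha_bar l u y p j g"
    by (metis ereal_less_eq(5), simp)
qed

lemma in_box_transfer:
  assumes "in_box l u y" "0 \<le> t"
    and "ereal t \<le> u $ p - ereal (y $ p)" "ereal t \<le> ereal (y $ j) - l $ j"
  shows "in_box l u (y + t *\<^sub>R (axis p 1 - axis j 1))"
proof (cases "p = j")
  case False
  have "ereal (y $ p + t) \<le> u $ p" "l $ j \<le> ereal (y $ j - t)"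
    using assms(3,4) by (cases "u $ p"; cases "l $ j"; simp)+
  moreover have "l $ p \<le> ereal (y $ p + t)" "ereal (y $ j - t) \<le> u $ j"
    using assms(1,2) unfolding in_box_def by (meson ereal_less_eq(3) le_add_same_cancel1 order_trans diff_le_eq)+
  ultimately show ?thesis
    using assms(1) False unfolding in_box_def by (auto simp: axis_def)
qed (use assms(1) in simp)

lemma in_box_coordinate_step:
  assumes "in_box l u y" "0 \<le> \<alpha>" "ereal \<alpha> \<le> alpha_bar l u y p j g"
  shows "in_box l u (y + (\<alpha> * g) *\<^sub>R (axis p 1 - axis j 1))"
proof -
  consider "g > 0" | "g < 0" | "g = 0" by linarith
  then show ?thesis
  proof cases
    case 1
    then have "ereal (\<alpha> * g) \<le> min (u $ p - ereal (y $ p)) (ereal (y $ j) - l $ j)"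
      using assms(3) unfolding alpha_bar_def
      by (cases "min (u $ p - ereal (y $ p)) (ereal (y $ j) - l $ j)") (auto simp: field_simps)
    with 1 show ?thesis using in_box_transfer[OF assms(1), of "\<alpha> * g"] assms(2) by simp
  next
    case 2
    then have "ereal (\<alpha> * \<bar>g\<bar>) \<le> min (ereal (y $ p) - l $ p) (u $ j - ereal (y $ j))"
      using assms(3) unfolding alpha_bar_def
      by (cases "min (ereal (y $ p) - l $ p) (u $ j - ereal (y $ j))") (auto simp: field_simps)
    moreover have "(\<alpha> * g) *\<^sub>R (axis p 1 - axis j 1) = (\<alpha> * \<bar>g\<bar>) *\<^sub>R (axis j 1 - axis p 1 :: real ^ 'a)"
      using 2 by (simp add: algebra_simps)
    ultimately show ?thesis using in_box_transfer[OF assms(1), of "\<alpha> * \<bar>g\<bar>" j p] assms(2) by simp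
  qed (use assms(1) in simp)
qed

lemma nested_iteration_invariant:
  fixes N :: nat and z :: "nat \<Rightarrow> nat \<Rightarrow> 'a"
  assumes "Q (x 0)" "\<And>k. z k 1 = x k" "\<And>k. x (Suc k) = z k (N + 1)"
    and step: "\<And>k i. i \<in> {1..N} \<Longrightarrow> Q (z k i) \<Longrightarrow> Q (z k (i + 1))"
  shows "i \<in> {1..N + 1} \<Longrightarrow> Q (z k i)"
proof -
  have inner: "Q (z k i)" if "Q (x k)" "1 \<le> i" "i \<le> N + 1" for k i
    using that(2,3)
  proof (induction i rule: dec_induct)
    case base then show ?case using that(1) assms(2) by simp
  next
    case (step i) then show ?case using assms(4)[of i k] by simp
  qed
  have "Q (x k)" for k
    by (induction k) (use assms(1,3) inner in auto)
  then show "i \<in> {1..N + 1} \<Longrightarrow> Q (z k i)" using inner by simp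
qed

theorem lemma1:
  fixes f :: "real ^ 'n::finite \<Rightarrow> real"
    and grad :: "real ^ 'n \<Rightarrow> real ^ 'n"
    and L :: real
    and Lij :: "'n \<Rightarrow> 'n \<Rightarrow> real"
    and l u :: "ereal ^ 'n"
    and b :: real
    and \<tau> \<gamma> \<delta> A_l A_u :: real
    and x0 :: "real ^ 'n"
    and x :: "nat \<Rightarrow> real ^ 'n"
    and jk :: "nat \<Rightarrow> 'n"
    and pk :: "nat \<Rightarrow> nat \<Rightarrow> 'n"
    and z :: "nat \<Rightarrow> nat \<Rightarrow> real ^ 'n"
    and A Delta \<alpha> :: "nat \<Rightarrow> nat \<Rightarrow> real"
  assumes n2: "CARD('n) \<ge> 2"
    and lu: "\<forall>i. l $ i < u $ i \<and> l $ i \<noteq> \<infinity> \<and> u $ i \<noteq> -\<infinity>"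
    and deriv: "\<forall>y. (f has_derivative (\<lambda>h. grad y \<bullet> h)) (at y)"
    and lip: "\<forall>y y'. norm (grad y - grad y') \<le> L * dist y y'"
    and Lij_pos: "\<forall>i j. i \<noteq> j \<longrightarrow> Lij i j > 0"
    and Lij_diag: "\<forall>i. Lij i i = 0"
    and Lij_lip: "\<forall>i j y s t. \<bar>grad (y + s *\<^sub>R (axis i 1 - axis j 1)) \<bullet> (axis i 1 - axis j 1)
                                 - grad (y + t *\<^sub>R (axis i 1 - axis j 1)) \<bullet> (axis i 1 - axis j 1)\<bar>
                              \<le> Lij i j * \<bar>s - t\<bar>"
    and params: "0 < \<tau> \<and> \<tau> \<le> 1 \<and> 0 < \<gamma> \<and> \<gamma> < 1 \<and> 0 < \<delta> \<and> \<delta> < 1 \<and> 0 < A_l \<and> A_l \<le> A_u"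
    and x0F: "x0 \<in> feasible l u b"
    and level_ne: "{y \<in> feasible l u b. f y \<le> f x0} \<noteq> {}"
    and level_cpt: "compact {y \<in> feasible l u b. f y \<le> f x0}"
    and level_free: "\<forall>y \<in> {y \<in> feasible l u b. f y \<le> f x0}. \<exists>i. l $ i < ereal (y $ i) \<and> ereal (y $ i) < u $ i"
    and x_init: "x 0 = x0"
    and j_choice: "\<forall>k. Dist l u (x k) (jk k) \<ge> ereal \<tau> * Max (range (Dist l u (x k)))"
    and p_perm: "\<forall>k. bij_betw (pk k) {1..CARD('n)} (UNIV :: 'n set)"
    and z_init: "\<forall>k. z k 1 = x k"
    and A_range: "\<forall>k. \<forall>i\<in>{1..CARD('n)}. A_l \<le> A k i \<and> A k i \<le> A_u"
    and Delta_def: "\<forall>k. \<forall>i\<in>{1..CARD('n)}.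
        Delta k i = real_of_ereal (min (alpha_bar l u (z k i) (pk k i) (jk k)
                                          (gval grad (z k i) (pk k i) (jk k))) (ereal (A k i)))"
    and alpha_def: "\<forall>k. \<forall>i\<in>{1..CARD('n)}.
        \<alpha> k i = armijo f grad (z k i)
                   (gval grad (z k i) (pk k i) (jk k) *\<^sub>R (axis (pk k i) 1 - axis (jk k) 1))
                   (Delta k i) \<gamma> \<delta>"
    and z_step: "\<forall>k. \<forall>i\<in>{1..CARD('n)}.
        z k (i + 1) = z k i + (\<alpha> k i * gval grad (z k i) (pk k i) (jk k)) *\<^sub>R (axis (pk k i) 1 - axis (jk k) 1)"
    and x_step: "\<forall>k. x (Suc k) = z k (CARD('n) + 1)"
  shows "\<forall>k. \<forall>i\<in>{1..CARD('n)}.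
           (let p = pk k i; j = jk k in
             ((Lij p j = 0 \<or> Delta k i \<le> 2 * (1 - \<gamma>) / Lij p j) \<longrightarrow> \<alpha> k i = Delta k i)
           \<and> ((Lij p j \<noteq> 0 \<and> Delta k i > 2 * (1 - \<gamma>) / Lij p j) \<longrightarrow>
                 2 * \<delta> * (1 - \<gamma>) / Lij p j < \<alpha> k i \<and> \<alpha> k i \<le> Delta k i)
           \<and> \<alpha> k i \<ge> (if Lij p j = 0 then Delta k i else min (Delta k i) (2 * \<delta> * (1 - \<gamma>) / Lij p j)))"
proof -
  have \<gamma>: "0 < \<gamma>" "\<gamma> < 1" and \<delta>: "0 < \<delta>" "\<delta> < 1" using params by auto
  note step_bounds = coordinate_armijo_step_bounds[OF deriv[rule_format] Lij_lip[rule_format] \<gamma> \<delta> _ alpha_def[rule_format]]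
  have Delta_bounds: "0 \<le> Delta k i \<and> ereal (Delta k i) \<le> alpha_bar l u (z k i) (pk k i) (jk k) (gval grad (z k i) (pk k i) (jk k))"
    if "i \<in> {1..CARD('n)}" "in_box l u (z k i)" for k i
  proof -
    have "A_l \<le> A k i" using A_range that(1) by blast
    then have "0 < A k i" using params by linarith
    from truncated_step_bounds[OF that(2) this Delta_def[rule_format, OF that(1)]] show ?thesis ..
  qed
  have in_box: "in_box l u (z k i)" if "i \<in> {1..CARD('n) + 1}" for k i
  proof (rule nested_iteration_invariant[where Q = "in_box l u" and z = z and x = x, OF _ z_init[rule_format] x_step[rule_format] _ that])
    show "in_box l u (x 0)" using x0F unfolding x_init feasible_def in_box_def by simp
    fix k i assume "i \<in> {1..CARD('n)}" "in_box l u (z k i)"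
    with Delta_bounds step_bounds(1,2) show "in_box l u (z k (i + 1))"
      unfolding z_step[rule_format, OF \<open>i \<in> {1..CARD('n)}\<close>]
      by (meson in_box_coordinate_step ereal_less_eq(3) order_trans)
  qed
  show ?thesis
    unfolding Let_def using step_bounds(3) Delta_bounds in_box by simp
qed

end
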